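(* Let $L_{k-1}>0$, $L_k>0$, $\mu_f>0$, $\tau_{k-1},\tau_k\in(0,1)$, and set $m_k:=\frac{L_k+\mu_f}{L_{k-1}+\mu_f}$, $a_k:=\frac{L_k}{L_{k-1}+\mu_f}$. Assume $$(1-\tau_k)\big[\tau_{k-1}^2+m_k\tau_k\big]\ge a_k\tau_k\qquad\text{and}\qquad m_k\tau_k\tau_{k-1}^2+m_k^2\tau_k^2\ge a_k\tau_{k-1}^2.$$ Then the interval $$\max\Big\{\frac{\tau_{k-1}+\sqrt{\tau_{k-1}^2+4a_k}}{2(1-\tau_{k-1})},\ \frac{a_k\tau_k}{(1-\tau_k)(1-\tau_{k-1})\tau_{k-1}}\Big\}\le\omega_k\le\frac{\tau_{k-1}^2+m_k\tau_k}{\tau_{k-1}(1-\tau_{k-1})}$$ is nonempty, and for any $\omega_k$ in it, any $x^{k-1},x^k,x\in\mathbb{R}^p$, and $\hat x^k:=x^k+\frac{1}{\omega_k}(x^k-x^{k-1})$, $$L_k\tau_k^2\big\|\tfrac1{\tau_k}[\hat x^k-(1-\tau_k)x^k]-x\big\|^2-\mu_f\tau_k(1-\tau_k)\|x^k-x\|^2\le(1-\tau_k)(L_{k-1}+\mu_f)\tau_{k-1}^2\big\|\tfrac1{\tau_{k-1}}[x^k-(1-\tau_{k-1})x^{k-1}]-x\big\|^2.$$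
   Context: Norms are Euclidean on $\mathbb{R}^p$. *)

theory Defs
  imports "HOL-Analysis.Analysis"
begin

end

theory Submission
  imports Defs
begin

text \<open>Write \<open>t = \<tau>\<^sub>k\<^sub>-\<^sub>1\<close>, \<open>s = \<tau>\<^sub>k\<close>, \<open>D = L\<^sub>k\<^sub>-\<^sub>1 + \<mu>\<close>, so that
  \<open>L\<^sub>k = a D\<close> and \<open>\<mu> = (m - a) D\<close>. With \<open>y = x\<^sup>k - x\<close>, \<open>v = (x\<^sup>k - x\<^sup>k\<^sup>-\<^sup>1) / \<omega>\<close> and
  \<open>z = (1 - t) \<omega>\<close>, the right-hand side minus the left-hand side is \<open>D\<close> times the
  quadratic form \<open>A \<parallel>y\<parallel>\<^sup>2 + 2 B \<langle>y, v\<rangle> + C \<parallel>v\<parallel>\<^sup>2\<close>, where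
  \<open>A = (1 - s)(t\<^sup>2 + m s) - a s\<close>, \<open>B = (1 - s) t z - a s\<close>, \<open>C = (1 - s) z\<^sup>2 - a\<close>.
  It is nonnegative once \<open>A, C \<ge> 0\<close> and \<open>B\<^sup>2 \<le> A C\<close>. The two lower bounds on \<open>\<omega>\<close> say
  \<open>z\<^sup>2 \<ge> t z + a\<close> and \<open>(1 - s) t z \<ge> a s\<close>, the upper bound says \<open>t z \<le> t\<^sup>2 + m s\<close>, and
  these make \<open>A C - B\<^sup>2\<close> a sum of products of nonnegative factors. The two hypotheses on
  \<open>s, t\<close> are exactly what puts both lower bounds below the upper one.\<close>

lemma norm_add_scaleR_power2:
  fixes y u :: "'a::real_inner"
  shows "(norm (y + c *\<^sub>R u))\<^sup>2 = (norm y)\<^sup>2 + 2 * c * inner y u + c\<^sup>2 * (norm u)\<^sup>2"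
  unfolding power2_norm_eq_inner
  by (simp add: inner_commute algebra_simps power2_eq_square)

lemma quadratic_form_nonneg:
  fixes y u :: "'a::real_inner"
  assumes "0 \<le> A" "0 \<le> C" "B\<^sup>2 \<le> A * C"
  shows "0 \<le> A * (norm y)\<^sup>2 + 2 * B * inner y u + C * (norm u)\<^sup>2"
proof (cases "A = 0")
  case True
  with assms show ?thesis by simp
next
  case False
  have "A * (A * (norm y)\<^sup>2 + 2 * B * inner y u + C * (norm u)\<^sup>2)
        = (norm (A *\<^sub>R y + B *\<^sub>R u))\<^sup>2 + (A * C - B\<^sup>2) * (norm u)\<^sup>2"
    unfolding power2_norm_eq_inner
    by (simp add: inner_commute algebra_simps power2_eq_square)
  also have "\<dots> \<ge> 0"
    using assms(3) by simp
  finally show ?thesis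
    using assms(1) False by (simp add: zero_le_mult_iff)
qed

lemma mult_sqrt_le_of_quadratic:
  fixes t a b :: real
  assumes "0 \<le> t" "0 \<le> b" "0 \<le> a" "a * t\<^sup>2 \<le> b * t\<^sup>2 + b\<^sup>2"
  shows "t * sqrt (t\<^sup>2 + 4 * a) \<le> t\<^sup>2 + 2 * b"
proof -
  have "t * sqrt (t\<^sup>2 + 4 * a) = sqrt (t\<^sup>2 * (t\<^sup>2 + 4 * a))"
    using assms(1) by (simp add: real_sqrt_mult)
  also have "\<dots> \<le> t\<^sup>2 + 2 * b"
    using assms by (intro real_le_lsqrt) (auto simp: power2_eq_square algebra_simps)
  finally show ?thesis .
qed

lemma quadratic_ge_of_root_le:
  fixes t a z :: real
  assumes "0 \<le> t\<^sup>2 + 4 * a" "t + sqrt (t\<^sup>2 + 4 * a) \<le> 2 * z"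
  shows "t * z + a \<le> z\<^sup>2"
proof -
  have "sqrt (t\<^sup>2 + 4 * a) \<le> 2 * z - t"
    using assms(2) by simp
  then have "(sqrt (t\<^sup>2 + 4 * a))\<^sup>2 \<le> (2 * z - t)\<^sup>2"
    using assms(1) by (intro power_mono) simp_all
  then show ?thesis
    using assms(1) by (simp add: power2_eq_square algebra_simps)
qed

lemma step_size_interval_nonempty:
  fixes a m s t :: real
  assumes t: "0 < t" "t < 1" and s: "0 < s" "s < 1" and "0 \<le> a" "0 \<le> m"
    and c1: "a * s \<le> (1 - s) * (t\<^sup>2 + m * s)"
    and c2: "a * t\<^sup>2 \<le> m * s * t\<^sup>2 + m\<^sup>2 * s\<^sup>2"
  shows "max ((t + sqrt (t\<^sup>2 + 4 * a)) / (2 * (1 - t))) (a * s / ((1 - s) * (1 - t) * t))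
         \<le> (t\<^sup>2 + m * s) / (t * (1 - t))"
proof -
  define r where "r = sqrt (t\<^sup>2 + 4 * a)"
  have "t * r \<le> t\<^sup>2 + 2 * (m * s)"
    unfolding r_def using assms c2 by (intro mult_sqrt_le_of_quadratic) (auto simp: power_mult_distrib)
  then have "(1 - t) * (t * r) \<le> (1 - t) * (t\<^sup>2 + 2 * (m * s))"
    using t by (intro mult_left_mono) simp_all
  then have "(t + r) / (2 * (1 - t)) \<le> (t\<^sup>2 + m * s) / (t * (1 - t))"
    using t by (simp add: divide_simps algebra_simps power2_eq_square)
  moreover have "a * s / ((1 - s) * (1 - t) * t) \<le> (t\<^sup>2 + m * s) / (t * (1 - t))"
    using t s c1 by (simp add: divide_simps) (simp add: algebra_simps)
  ultimately show ?thesis by (simp add: r_def)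
qed

lemma step_size_bounds_rescaled:
  fixes a m s t w :: real
  assumes t: "0 < t" "t < 1" and s: "s < 1" and "0 \<le> a"
    and lo: "max ((t + sqrt (t\<^sup>2 + 4 * a)) / (2 * (1 - t))) (a * s / ((1 - s) * (1 - t) * t)) \<le> w"
    and hi: "w \<le> (t\<^sup>2 + m * s) / (t * (1 - t))"
  shows "0 < w" and "t * ((1 - t) * w) + a \<le> ((1 - t) * w)\<^sup>2"
    and "a * s \<le> (1 - s) * t * ((1 - t) * w)" and "t * ((1 - t) * w) \<le> t\<^sup>2 + m * s"
proof -
  have root: "t + sqrt (t\<^sup>2 + 4 * a) \<le> 2 * ((1 - t) * w)"
    using lo t by (simp add: pos_divide_le_eq algebra_simps)
  moreover have "0 < t + sqrt (t\<^sup>2 + 4 * a)"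
    using t assms(4) by (simp add: add_pos_nonneg)
  ultimately have "0 < (1 - t) * w"
    by linarith
  with t show "0 < w"
    by (simp add: zero_less_mult_iff)
  show "t * ((1 - t) * w) + a \<le> ((1 - t) * w)\<^sup>2"
    using root assms(4) by (intro quadratic_ge_of_root_le) simp_all
  have "a * s / ((1 - s) * (1 - t) * t) \<le> w"
    using lo by simp
  moreover have "0 < (1 - s) * (1 - t) * t"
    using t s by simp
  ultimately have "a * s \<le> w * ((1 - s) * (1 - t) * t)"
    by (simp add: pos_divide_le_eq)
  then show "a * s \<le> (1 - s) * t * ((1 - t) * w)"
    by (simp add: algebra_simps)
  show "t * ((1 - t) * w) \<le> t\<^sup>2 + m * s"
    using hi t by (simp add: pos_le_divide_eq algebra_simps)
qed

lemma rescaled_coefficient_nonneg: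
  fixes a s t z :: real
  assumes "s \<le> 1" and root: "t * z + a \<le> z\<^sup>2" and lo: "a * s \<le> (1 - s) * t * z"
  shows "0 \<le> (1 - s) * z\<^sup>2 - a"
proof -
  have "(1 - s) * (t * z + a) \<le> (1 - s) * z\<^sup>2"
    using root assms(1) by (intro mult_left_mono) simp_all
  with lo show ?thesis
    by (simp add: algebra_simps)
qed

lemma step_coefficients_discriminant:
  fixes a m s t z :: real
  assumes "s \<le> 1" and root: "t * z + a \<le> z\<^sup>2"
    and lo: "a * s \<le> (1 - s) * t * z" and hi: "t * z \<le> t\<^sup>2 + m * s"
  shows "((1 - s) * t * z - a * s)\<^sup>2 \<le> ((1 - s) * (t\<^sup>2 + m * s) - a * s) * ((1 - s) * z\<^sup>2 - a)"
proof -
  have C: "0 \<le> (1 - s) * z\<^sup>2 - a"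
    using assms(1) root lo by (rule rescaled_coefficient_nonneg)
  have "((1 - s) * (t\<^sup>2 + m * s) - a * s) * ((1 - s) * z\<^sup>2 - a) - ((1 - s) * t * z - a * s)\<^sup>2
        = (1 - s) * ((m * s - t * (z - t)) * ((1 - s) * z\<^sup>2 - a)
                     + (z\<^sup>2 - t * z - a) * ((1 - s) * t * z - a * s))"
    by (simp add: algebra_simps power2_eq_square)
  also have "\<dots> \<ge> 0"
    using assms C by (intro mult_nonneg_nonneg add_nonneg_nonneg) (simp_all add: algebra_simps power2_eq_square)
  finally show ?thesis by simp
qed

lemma momentum_step_inequality:
  fixes y v :: "'a::real_inner" and a m s t z D :: real
  assumes "0 < s" "s < 1" "0 < t" "0 \<le> D"
    and c1: "a * s \<le> (1 - s) * (t\<^sup>2 + m * s)"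
    and root: "t * z + a \<le> z\<^sup>2" and lo: "a * s \<le> (1 - s) * t * z" and hi: "t * z \<le> t\<^sup>2 + m * s"
  shows "a * D * s\<^sup>2 * (norm (y + (1 / s) *\<^sub>R v))\<^sup>2 - (m - a) * D * s * (1 - s) * (norm y)\<^sup>2
         \<le> (1 - s) * D * t\<^sup>2 * (norm (y + (z / t) *\<^sub>R v))\<^sup>2"
proof -
  define A where "A = (1 - s) * (t\<^sup>2 + m * s) - a * s"
  define B where "B = (1 - s) * t * z - a * s"
  define C where "C = (1 - s) * z\<^sup>2 - a"
  have "B\<^sup>2 \<le> A * C"
    unfolding A_def B_def C_def using assms by (intro step_coefficients_discriminant) simp_all
  moreover have "0 \<le> C"
    unfolding C_def using \<open>s < 1\<close> root lo by (intro rescaled_coefficient_nonneg) simp_all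
  ultimately have "0 \<le> A * (norm y)\<^sup>2 + 2 * B * inner y v + C * (norm v)\<^sup>2"
    using c1 by (intro quadratic_form_nonneg) (simp_all add: A_def)
  then have "0 \<le> D * (A * (norm y)\<^sup>2 + 2 * B * inner y v + C * (norm v)\<^sup>2)"
    using \<open>0 \<le> D\<close> by simp
  moreover have "(1 - s) * D * t\<^sup>2 * (norm (y + (z / t) *\<^sub>R v))\<^sup>2
      - (a * D * s\<^sup>2 * (norm (y + (1 / s) *\<^sub>R v))\<^sup>2 - (m - a) * D * s * (1 - s) * (norm y)\<^sup>2)
      = D * (A * (norm y)\<^sup>2 + 2 * B * inner y v + C * (norm v)\<^sup>2)"
    using assms unfolding norm_add_scaleR_power2 A_def B_def C_def
    by (simp add: field_simps power2_eq_square)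
  ultimately show ?thesis
    by linarith
qed

lemma extrapolated_step_inequality:
  fixes xprev xk x :: "'a::real_inner" and a m s t w D :: real
  assumes t: "0 < t" "t < 1" and s: "0 < s" "s < 1" and "0 \<le> a" "0 \<le> D"
    and c1: "a * s \<le> (1 - s) * (t\<^sup>2 + m * s)"
    and lo: "max ((t + sqrt (t\<^sup>2 + 4 * a)) / (2 * (1 - t))) (a * s / ((1 - s) * (1 - t) * t)) \<le> w"
    and hi: "w \<le> (t\<^sup>2 + m * s) / (t * (1 - t))"
  shows "a * D * s\<^sup>2 * (norm ((1 / s) *\<^sub>R (xk + (1 / w) *\<^sub>R (xk - xprev) - (1 - s) *\<^sub>R xk) - x))\<^sup>2
           - (m - a) * D * s * (1 - s) * (norm (xk - x))\<^sup>2
         \<le> (1 - s) * D * t\<^sup>2 * (norm ((1 / t) *\<^sub>R (xk - (1 - t) *\<^sub>R xprev) - x))\<^sup>2"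
proof -
  note bounds = step_size_bounds_rescaled[OF t s(2) \<open>0 \<le> a\<close> lo hi]
  define v where "v = (1 / w) *\<^sub>R (xk - xprev)"
  have lhs: "(1 / s) *\<^sub>R (xk + (1 / w) *\<^sub>R (xk - xprev) - (1 - s) *\<^sub>R xk) - x
             = (xk - x) + (1 / s) *\<^sub>R v"
    using s by (simp add: v_def algebra_simps)
  have rhs: "(1 / t) *\<^sub>R (xk - (1 - t) *\<^sub>R xprev) - x = (xk - x) + ((1 - t) * w / t) *\<^sub>R v"
    using t bounds(1) by (simp add: v_def algebra_simps diff_divide_distrib)
  show ?thesis
    unfolding lhs rhs using assms bounds(2-4) by (intro momentum_step_inequality) simp_all
qed

theorem lemma7:
  fixes Lprev L mu tauprev tau :: real
  assumes hLprev: "Lprev > 0" and hL: "L > 0" and hmu: "mu > 0"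
    and htauprev: "0 < tauprev" "tauprev < 1"
    and htau: "0 < tau" "tau < 1"
  defines "m \<equiv> (L + mu) / (Lprev + mu)"
    and "a \<equiv> L / (Lprev + mu)"
  assumes c1: "(1 - tau) * (tauprev^2 + m * tau) \<ge> a * tau"
    and c2: "m * tau * tauprev^2 + m^2 * tau^2 \<ge> a * tauprev^2"
  shows "(\<exists>\<omega>::real.
            max ((tauprev + sqrt (tauprev^2 + 4 * a)) / (2 * (1 - tauprev)))
                (a * tau / ((1 - tau) * (1 - tauprev) * tauprev)) \<le> \<omega>
          \<and> \<omega> \<le> (tauprev^2 + m * tau) / (tauprev * (1 - tauprev)))
    \<and> (\<forall>\<omega>::real. \<forall>(xprev :: real^'p) xk x.
          max ((tauprev + sqrt (tauprev^2 + 4 * a)) / (2 * (1 - tauprev)))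
              (a * tau / ((1 - tau) * (1 - tauprev) * tauprev)) \<le> \<omega>
          \<and> \<omega> \<le> (tauprev^2 + m * tau) / (tauprev * (1 - tauprev)) \<longrightarrow>
          (let xhat = xk + (1 / \<omega>) *\<^sub>R (xk - xprev) in
            L * tau^2 * (norm ((1 / tau) *\<^sub>R (xhat - (1 - tau) *\<^sub>R xk) - x))^2
              - mu * tau * (1 - tau) * (norm (xk - x))^2
            \<le> (1 - tau) * (Lprev + mu) * tauprev^2
              * (norm ((1 / tauprev) *\<^sub>R (xk - (1 - tauprev) *\<^sub>R xprev) - x))^2))"
proof -
  have D: "0 < Lprev + mu"
    using hLprev hmu by simp
  have a_D: "a * (Lprev + mu) = L" and m_a_D: "(m - a) * (Lprev + mu) = mu"
    using D by (simp_all add: a_def m_def flip: diff_divide_distrib)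
  have "0 \<le> a" "0 \<le> m"
    using hL hmu D by (simp_all add: a_def m_def)
  show ?thesis
    using step_size_interval_nonempty[OF htauprev htau \<open>0 \<le> a\<close> \<open>0 \<le> m\<close> c1 c2]
      extrapolated_step_inequality[OF htauprev htau \<open>0 \<le> a\<close> less_imp_le[OF D] c1]
    by (auto simp: Let_def a_D m_a_D)
qed

end
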